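(* Let $(A,+,\circ)$ be a $*$-nilpotent skew brace of nilpotent type and let $I$ be a nonzero ideal of $A$. Then $\zeta(A)\cap I\neq 0$. In particular, if $A\neq 0$ then $\zeta(A)\neq0$.
   Context: A skew brace is a triple $(A,+,\circ)$ where $(A,+)$ and $(A,\circ)$ are groups (not necessarily abelian; $+$ is written additively) such that $x\circ(y+z)=(x\circ y)-x+(x\circ z)$ for all $x,y,z\in A$; the common neutral element is $0$. It is of nilpotent type if $(A,+)$ is nilpotent. Let $\lambda_x(y)=-x+(x\circ y)$ and $x*y=\lambda_x(y)-y$; $[x,y]_+=x+y-x-y$. For subsets $X,Y$, $X*Y$ is the subgroup of $(A,+)$ generated by $\{x*y\}$. Left and right series: $A^1=A$, $A^{n+1}=A*A^n$; $A^{(1)}=A$, $A^{(n+1)}=A^{(n)}*A$; $A$ is $*$-nilpotent if $A^n=0$ and $A^{(m)}=0$ for some $n,m$. An ideal is a subgroup $I$ of $(A,+)$ with $\lambda_a(I)\subseteq I$ for all $a\in A$ that is normal in both $(A,+)$ and $(A,\circ)$. The center is $\zeta(A)=\{x\in A: x*y=y*x=[x,y]_+=0\ \forall y\in A\}$. *)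

theory Defs
  imports "HOL-Algebra.Algebra"
begin

text \<open>A skew brace is given by a carrier set A, an additive operation plus_op (not necessarily
commutative), a circle operation circ and the common neutral element z.\<close>

definition add_grp :: "'a set \<Rightarrow> ('a \<Rightarrow> 'a \<Rightarrow> 'a) \<Rightarrow> 'a \<Rightarrow> 'a monoid" where
  "add_grp A plus_op z = \<lparr>carrier = A, monoid.mult = plus_op, one = z\<rparr>"

definition circ_grp :: "'a set \<Rightarrow> ('a \<Rightarrow> 'a \<Rightarrow> 'a) \<Rightarrow> 'a \<Rightarrow> 'a monoid" where
  "circ_grp A circ z = \<lparr>carrier = A, monoid.mult = circ, one = z\<rparr>"

definition neg :: "'a set \<Rightarrow> ('a \<Rightarrow> 'a \<Rightarrow> 'a) \<Rightarrow> 'a \<Rightarrow> 'a \<Rightarrow> 'a" where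
  "neg A plus_op z x = inv\<^bsub>add_grp A plus_op z\<^esub> x"

definition skew_brace :: "'a set \<Rightarrow> ('a \<Rightarrow> 'a \<Rightarrow> 'a) \<Rightarrow> ('a \<Rightarrow> 'a \<Rightarrow> 'a) \<Rightarrow> 'a \<Rightarrow> bool" where
  "skew_brace A plus_op circ z \<longleftrightarrow>
     group (add_grp A plus_op z) \<and> group (circ_grp A circ z) \<and>
     (\<forall>x\<in>A. \<forall>y\<in>A. \<forall>w\<in>A.
        circ x (plus_op y w) = plus_op (plus_op (circ x y) (neg A plus_op z x)) (circ x w))"

definition lam :: "'a set \<Rightarrow> ('a \<Rightarrow> 'a \<Rightarrow> 'a) \<Rightarrow> ('a \<Rightarrow> 'a \<Rightarrow> 'a) \<Rightarrow> 'a \<Rightarrow> 'a \<Rightarrow> 'a \<Rightarrow> 'a" where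
  "lam A plus_op circ z x y = plus_op (neg A plus_op z x) (circ x y)"

definition star :: "'a set \<Rightarrow> ('a \<Rightarrow> 'a \<Rightarrow> 'a) \<Rightarrow> ('a \<Rightarrow> 'a \<Rightarrow> 'a) \<Rightarrow> 'a \<Rightarrow> 'a \<Rightarrow> 'a \<Rightarrow> 'a" where
  "star A plus_op circ z x y = plus_op (lam A plus_op circ z x y) (neg A plus_op z y)"

definition acomm :: "'a set \<Rightarrow> ('a \<Rightarrow> 'a \<Rightarrow> 'a) \<Rightarrow> 'a \<Rightarrow> 'a \<Rightarrow> 'a \<Rightarrow> 'a" where
  "acomm A plus_op z x y = plus_op (plus_op (plus_op x y) (neg A plus_op z x)) (neg A plus_op z y)"

definition star_set :: "'a set \<Rightarrow> ('a \<Rightarrow> 'a \<Rightarrow> 'a) \<Rightarrow> ('a \<Rightarrow> 'a \<Rightarrow> 'a) \<Rightarrow> 'a \<Rightarrow> 'a set \<Rightarrow> 'a set \<Rightarrow> 'a set" where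
  "star_set A plus_op circ z S1 S2 =
     generate (add_grp A plus_op z) {star A plus_op circ z x y | x y. x \<in> S1 \<and> y \<in> S2}"

text \<open>Left series: left_series n = A^(n+1); right series: right_series n = A^((n+1)).\<close>
fun left_series :: "'a set \<Rightarrow> ('a \<Rightarrow> 'a \<Rightarrow> 'a) \<Rightarrow> ('a \<Rightarrow> 'a \<Rightarrow> 'a) \<Rightarrow> 'a \<Rightarrow> nat \<Rightarrow> 'a set" where
  "left_series A plus_op circ z 0 = A"
| "left_series A plus_op circ z (Suc n) = star_set A plus_op circ z A (left_series A plus_op circ z n)"

fun right_series :: "'a set \<Rightarrow> ('a \<Rightarrow> 'a \<Rightarrow> 'a) \<Rightarrow> ('a \<Rightarrow> 'a \<Rightarrow> 'a) \<Rightarrow> 'a \<Rightarrow> nat \<Rightarrow> 'a set" where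
  "right_series A plus_op circ z 0 = A"
| "right_series A plus_op circ z (Suc n) = star_set A plus_op circ z (right_series A plus_op circ z n) A"

definition star_nilpotent :: "'a set \<Rightarrow> ('a \<Rightarrow> 'a \<Rightarrow> 'a) \<Rightarrow> ('a \<Rightarrow> 'a \<Rightarrow> 'a) \<Rightarrow> 'a \<Rightarrow> bool" where
  "star_nilpotent A plus_op circ z \<longleftrightarrow>
     (\<exists>n. left_series A plus_op circ z n = {z}) \<and> (\<exists>m. right_series A plus_op circ z m = {z})"

fun lower_central :: "'a set \<Rightarrow> ('a \<Rightarrow> 'a \<Rightarrow> 'a) \<Rightarrow> 'a \<Rightarrow> nat \<Rightarrow> 'a set" where
  "lower_central A plus_op z 0 = A"
| "lower_central A plus_op z (Suc n) =
     generate (add_grp A plus_op z) {acomm A plus_op z x y | x y. x \<in> A \<and> y \<in> lower_central A plus_op z n}"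

definition nilpotent_type :: "'a set \<Rightarrow> ('a \<Rightarrow> 'a \<Rightarrow> 'a) \<Rightarrow> 'a \<Rightarrow> bool" where
  "nilpotent_type A plus_op z \<longleftrightarrow> (\<exists>n. lower_central A plus_op z n = {z})"

definition brace_ideal :: "'a set \<Rightarrow> ('a \<Rightarrow> 'a \<Rightarrow> 'a) \<Rightarrow> ('a \<Rightarrow> 'a \<Rightarrow> 'a) \<Rightarrow> 'a \<Rightarrow> 'a set \<Rightarrow> bool" where
  "brace_ideal A plus_op circ z I \<longleftrightarrow>
     subgroup I (add_grp A plus_op z) \<and>
     (\<forall>a\<in>A. lam A plus_op circ z a ` I \<subseteq> I) \<and>
     I \<lhd> add_grp A plus_op z \<and> I \<lhd> circ_grp A circ z"

definition brace_center :: "'a set \<Rightarrow> ('a \<Rightarrow> 'a \<Rightarrow> 'a) \<Rightarrow> ('a \<Rightarrow> 'a \<Rightarrow> 'a) \<Rightarrow> 'a \<Rightarrow> 'a set" where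
  "brace_center A plus_op circ z =
     {x \<in> A. \<forall>y\<in>A. star A plus_op circ z x y = z \<and> star A plus_op circ z y x = z \<and> acomm A plus_op z x y = z}"

end

theory Submission
  imports Defs
begin

text \<open>
  Write \<open>Soc(A)\<close> for the elements of \<open>A\<close> that lie in the kernel of \<open>\<lambda>\<close> and in the
  centre of \<open>(A,+)\<close>. Starting from a nonzero ideal \<open>I\<close>, the right series
  \<open>I, I*A, (I*A)*A, \<dots>\<close> consists of normal subgroups of \<open>(A,+)\<close> inside \<open>I\<close> and reaches \<open>0\<close>,
  so its last nonzero term \<open>N\<close> satisfies \<open>N*A = 0\<close>, i.e. \<open>N \<subseteq> ker \<lambda>\<close>. Since \<open>(A,+)\<close> is
  nilpotent, \<open>N\<close> meets the centre of \<open>(A,+)\<close>, hence \<open>I \<inter> Soc(A) \<noteq> 0\<close>. Now \<open>I \<inter> Soc(A)\<close>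
  is an additive subgroup invariant under every \<open>\<lambda>\<^sub>a\<close>, so the left series
  \<open>I \<inter> Soc(A), A*(I \<inter> Soc(A)), \<dots>\<close> stays inside it and reaches \<open>0\<close>; a nonzero element
  of its last nonzero term is annihilated by \<open>*\<close> from both sides and is additively
  central, i.e. it lies in \<open>\<zeta>(A) \<inter> I\<close>.
\<close>

lemma exists_last_nontrivial_stage:
  fixes z :: 'a and f :: "'a set \<Rightarrow> 'a set" and T :: "nat \<Rightarrow> 'a set"
  assumes "T n \<subseteq> {z}" and "S \<subseteq> T 0" and "\<not> S \<subseteq> {z}" and "P S"
    and step: "\<And>S. P S \<Longrightarrow> P (f S)"
    and below: "\<And>S k. P S \<Longrightarrow> S \<subseteq> T k \<Longrightarrow> f S \<subseteq> T (Suc k)"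
  shows "\<exists>S'. P S' \<and> \<not> S' \<subseteq> {z} \<and> f S' \<subseteq> {z}"
  using assms(1-4) below
proof (induction n arbitrary: S T)
  case 0
  then show ?case by blast
next
  case (Suc n)
  show ?case
  proof (cases "f S \<subseteq> {z}")
    case True
    with Suc.prems(3,4) show ?thesis by blast
  next
    case False
    have "f S \<subseteq> T (Suc 0)"
      using Suc.prems(2,4,5) by blast
    moreover have "P (f S)"
      using step Suc.prems(4) .
    moreover have "\<And>S k. P S \<Longrightarrow> S \<subseteq> T (Suc k) \<Longrightarrow> f S \<subseteq> T (Suc (Suc k))"
      using Suc.prems(5) .
    ultimately show ?thesis
      using Suc.IH[of "\<lambda>k. T (Suc k)" "f S"] Suc.prems(1) False by blast
  qed
qed

lemma (in group) normal_generate_conjI: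
  assumes H: "H \<subseteq> carrier G"
    and conj: "\<And>h g. h \<in> H \<Longrightarrow> g \<in> carrier G \<Longrightarrow> g \<otimes> h \<otimes> inv g \<in> generate G H"
  shows "generate G H \<lhd> G"
proof (rule normal_invI[OF generate_is_subgroup[OF H]])
  fix g h
  assume g: "g \<in> carrier G"
  show "h \<in> generate G H \<Longrightarrow> g \<otimes> h \<otimes> inv g \<in> generate G H"
  proof (induction h rule: generate.induct)
    case one
    then show ?case using g generate.one by simp
  next
    case (incl h)
    then show ?case using conj g by blast
  next
    case (inv h)
    then have "h \<in> carrier G" using H by blast
    then have "g \<otimes> inv h \<otimes> inv g = inv (g \<otimes> h \<otimes> inv g)"
      using g by (simp add: inv_mult_group m_assoc)
    then show ?case
      using generate_m_inv_closed[OF H conj[OF inv g]] by simp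
  next
    case (eng h1 h2)
    then have "h1 \<in> carrier G" "h2 \<in> carrier G"
      using generate_in_carrier[OF H] by auto
    then have "g \<otimes> (h1 \<otimes> h2) \<otimes> inv g = (g \<otimes> h1 \<otimes> inv g) \<otimes> (g \<otimes> h2 \<otimes> inv g)"
      using g by (simp add: inv_solve_left m_assoc)
    then show ?case
      using generate.eng[OF eng.IH] by simp
  qed
qed

locale additive_group =
  fixes A :: "'a set" and add :: "'a \<Rightarrow> 'a \<Rightarrow> 'a" (infixl \<open>\<boxplus>\<close> 65) and z :: 'a
  assumes group_add_grp: "group (add_grp A add z)"
begin

abbreviation G :: "'a monoid" where "G \<equiv> add_grp A add z"
abbreviation ainv :: "'a \<Rightarrow> 'a" (\<open>\<boxminus> _\<close> [81] 81) where "\<boxminus> x \<equiv> neg A add z x"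

sublocale G: group G by (rule group_add_grp)

lemma add_grp_simps [simp]:
  "carrier G = A" "monoid.mult G = add" "one G = z" "inv\<^bsub>G\<^esub> x = \<boxminus> x"
  by (simp_all add: add_grp_def neg_def)

lemma add_closed [simp]: "x \<in> A \<Longrightarrow> y \<in> A \<Longrightarrow> x \<boxplus> y \<in> A"
  using G.m_closed by simp

lemma zero_closed [simp]: "z \<in> A"
  using G.one_closed by simp

lemma ainv_closed [simp]: "x \<in> A \<Longrightarrow> \<boxminus> x \<in> A"
  using G.inv_closed by simp

lemma add_assoc [simp]: "x \<in> A \<Longrightarrow> y \<in> A \<Longrightarrow> w \<in> A \<Longrightarrow> x \<boxplus> y \<boxplus> w = x \<boxplus> (y \<boxplus> w)"
  using G.m_assoc by simp

lemma add_zero_left [simp]: "x \<in> A \<Longrightarrow> z \<boxplus> x = x"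
  using G.l_one by simp

lemma add_zero_right [simp]: "x \<in> A \<Longrightarrow> x \<boxplus> z = x"
  using G.r_one by simp

lemma add_ainv_left [simp]: "x \<in> A \<Longrightarrow> \<boxminus> x \<boxplus> x = z"
  using G.l_inv by simp

lemma add_ainv_right [simp]: "x \<in> A \<Longrightarrow> x \<boxplus> \<boxminus> x = z"
  using G.r_inv by simp

lemma ainv_add_cancel_left [simp]: "x \<in> A \<Longrightarrow> y \<in> A \<Longrightarrow> \<boxminus> x \<boxplus> (x \<boxplus> y) = y"
  by (metis add_assoc ainv_closed add_ainv_left add_zero_left)

lemma add_ainv_cancel_left [simp]: "x \<in> A \<Longrightarrow> y \<in> A \<Longrightarrow> x \<boxplus> (\<boxminus> x \<boxplus> y) = y"
  by (metis add_assoc ainv_closed add_ainv_right add_zero_left)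

lemma ainv_zero [simp]: "\<boxminus> z = z"
  using G.inv_one by simp

lemma ainv_add [simp]: "x \<in> A \<Longrightarrow> y \<in> A \<Longrightarrow> \<boxminus> (x \<boxplus> y) = \<boxminus> y \<boxplus> \<boxminus> x"
  using G.inv_mult_group by simp

lemma add_eq_iff_left: "x \<in> A \<Longrightarrow> y \<in> A \<Longrightarrow> w \<in> A \<Longrightarrow> x \<boxplus> y = w \<longleftrightarrow> y = \<boxminus> x \<boxplus> w"
  by auto

lemma add_ainv_eq_iff_right: "u \<in> A \<Longrightarrow> v \<in> A \<Longrightarrow> w \<in> A \<Longrightarrow> u \<boxplus> \<boxminus> v = w \<longleftrightarrow> u = w \<boxplus> v"
  by (metis G.inv_solve_right add_grp_simps(1,2,4))

lemma acomm_eq_zero_iff: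
  "x \<in> A \<Longrightarrow> y \<in> A \<Longrightarrow> acomm A add z x y = z \<longleftrightarrow> x \<boxplus> y = y \<boxplus> x"
  unfolding acomm_def by (simp add: add_ainv_eq_iff_right del: add_assoc)

lemma acomm_mem_normal:
  assumes N: "N \<lhd> G" and "a \<in> A" and "w \<in> N"
  shows "acomm A add z a w \<in> N"
proof -
  have "a \<boxplus> w \<boxplus> \<boxminus> a \<in> N"
    using normal.inv_op_closed2[OF N] assms(2,3) by simp
  then show ?thesis
    unfolding acomm_def
    using subgroup.m_closed[OF normal_imp_subgroup[OF N]] subgroup.m_inv_closed[OF normal_imp_subgroup[OF N]] \<open>w \<in> N\<close>
    by simp
qed

lemma normal_subgroup_meets_center:
  assumes "lower_central A add z n = {z}" and N: "N \<lhd> G" and "\<not> N \<subseteq> {z}"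
  shows "\<exists>x\<in>N. x \<noteq> z \<and> (\<forall>a\<in>A. a \<boxplus> x = x \<boxplus> a)"
proof -
  let ?comm = "\<lambda>S. generate G {acomm A add z a w | a w. a \<in> A \<and> w \<in> S}"
  have N_sub: "subgroup N G" and "N \<subseteq> A"
    using N normal_imp_subgroup subgroup.subset by fastforce+
  have "\<exists>S. S \<subseteq> N \<and> \<not> S \<subseteq> {z} \<and> ?comm S \<subseteq> {z}"
  proof (rule exists_last_nontrivial_stage[where T = "lower_central A add z" and n = n])
    show "?comm S \<subseteq> N" if "S \<subseteq> N" for S
      using that acomm_mem_normal[OF N] by (intro G.generate_subgroup_incl[OF _ N_sub]) blast
    show "?comm S \<subseteq> lower_central A add z (Suc k)" if "S \<subseteq> lower_central A add z k" for S k
      unfolding lower_central.simps using that by (intro G.mono_generate) blast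
  qed (use assms(1,3) \<open>N \<subseteq> A\<close> in auto)
  then obtain S x where "S \<subseteq> N" "x \<in> S" "x \<noteq> z" and comm_trivial: "?comm S \<subseteq> {z}"
    by blast
  have "x \<in> A"
    using \<open>S \<subseteq> N\<close> \<open>x \<in> S\<close> \<open>N \<subseteq> A\<close> by blast
  have "acomm A add z a x \<in> ?comm S" if "a \<in> A" for a
    using that \<open>x \<in> S\<close> by (intro generate.incl) blast
  then have "a \<boxplus> x = x \<boxplus> a" if "a \<in> A" for a
    using comm_trivial acomm_eq_zero_iff[OF that \<open>x \<in> A\<close>] that by blast
  then show ?thesis
    using \<open>S \<subseteq> N\<close> \<open>x \<in> S\<close> \<open>x \<noteq> z\<close> by blast
qed

end

locale skew_brace_on =
  fixes A :: "'a set" and add :: "'a \<Rightarrow> 'a \<Rightarrow> 'a" (infixl \<open>\<boxplus>\<close> 65)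
    and circ :: "'a \<Rightarrow> 'a \<Rightarrow> 'a" (infixl \<open>\<bullet>\<close> 70) and z :: 'a
  assumes skew_brace: "skew_brace A add circ z"
begin

sublocale additive_group A add z
  using skew_brace by (intro additive_group.intro) (simp add: skew_brace_def)

abbreviation C :: "'a monoid" where "C \<equiv> circ_grp A circ z"
abbreviation cinv :: "'a \<Rightarrow> 'a" where "cinv x \<equiv> inv\<^bsub>C\<^esub> x"
abbreviation \<Lambda> :: "'a \<Rightarrow> 'a \<Rightarrow> 'a" where "\<Lambda> x y \<equiv> lam A add circ z x y"
abbreviation st :: "'a \<Rightarrow> 'a \<Rightarrow> 'a" (infixl \<open>\<star>\<close> 70) where "x \<star> y \<equiv> star A add circ z x y"

interpretation C: group C
  using skew_brace by (simp add: skew_brace_def)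

lemma circ_grp_simps [simp]: "carrier C = A" "monoid.mult C = circ" "one C = z"
  by (simp_all add: circ_grp_def)

lemma circ_closed [simp]: "x \<in> A \<Longrightarrow> y \<in> A \<Longrightarrow> x \<bullet> y \<in> A"
  using C.m_closed by simp

lemma cinv_closed [simp]: "x \<in> A \<Longrightarrow> cinv x \<in> A"
  using C.inv_closed by simp

lemma circ_assoc [simp]: "x \<in> A \<Longrightarrow> y \<in> A \<Longrightarrow> w \<in> A \<Longrightarrow> x \<bullet> y \<bullet> w = x \<bullet> (y \<bullet> w)"
  using C.m_assoc by simp

lemma circ_zero_left [simp]: "x \<in> A \<Longrightarrow> z \<bullet> x = x"
  using C.l_one by simp

lemma circ_zero_right [simp]: "x \<in> A \<Longrightarrow> x \<bullet> z = x"
  using C.r_one by simp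

lemma circ_cinv_right [simp]: "x \<in> A \<Longrightarrow> x \<bullet> cinv x = z"
  using C.r_inv by simp

lemma circ_cinv_cancel_left [simp]: "x \<in> A \<Longrightarrow> y \<in> A \<Longrightarrow> x \<bullet> (cinv x \<bullet> y) = y"
  by (metis circ_assoc cinv_closed circ_cinv_right circ_zero_left)

lemma circ_add_distrib:
  "x \<in> A \<Longrightarrow> y \<in> A \<Longrightarrow> w \<in> A \<Longrightarrow> x \<bullet> (y \<boxplus> w) = x \<bullet> y \<boxplus> \<boxminus> x \<boxplus> x \<bullet> w"
  using skew_brace by (simp add: skew_brace_def)

lemma lam_closed [simp]: "x \<in> A \<Longrightarrow> y \<in> A \<Longrightarrow> \<Lambda> x y \<in> A"
  by (simp add: lam_def)

lemma circ_eq_add_lam: "x \<in> A \<Longrightarrow> y \<in> A \<Longrightarrow> x \<bullet> y = x \<boxplus> \<Lambda> x y"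
  by (simp add: lam_def)

lemma lam_zero_left [simp]: "y \<in> A \<Longrightarrow> \<Lambda> z y = y"
  by (simp add: lam_def)

lemma lam_add: "x \<in> A \<Longrightarrow> y \<in> A \<Longrightarrow> w \<in> A \<Longrightarrow> \<Lambda> x (y \<boxplus> w) = \<Lambda> x y \<boxplus> \<Lambda> x w"
  by (simp add: lam_def circ_add_distrib)

lemma circ_ainv: "x \<in> A \<Longrightarrow> y \<in> A \<Longrightarrow> x \<bullet> \<boxminus> y = x \<boxplus> \<boxminus> (x \<bullet> y) \<boxplus> x"
proof -
  assume "x \<in> A" "y \<in> A"
  then have "x \<bullet> y \<boxplus> (\<boxminus> x \<boxplus> x \<bullet> \<boxminus> y) = x"
    using circ_add_distrib[of x y "\<boxminus> y"] by simp
  then have "\<boxminus> x \<boxplus> x \<bullet> \<boxminus> y = \<boxminus> (x \<bullet> y) \<boxplus> x"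
    using \<open>x \<in> A\<close> \<open>y \<in> A\<close> by (simp add: add_eq_iff_left)
  then show ?thesis
    using \<open>x \<in> A\<close> \<open>y \<in> A\<close> by (metis add_ainv_cancel_left ainv_closed circ_closed add_assoc)
qed

lemma lam_circ: "x \<in> A \<Longrightarrow> y \<in> A \<Longrightarrow> w \<in> A \<Longrightarrow> \<Lambda> (x \<bullet> y) w = \<Lambda> x (\<Lambda> y w)"
  by (simp add: lam_def circ_add_distrib circ_ainv)

lemma lam_cinv_cancel [simp]: "x \<in> A \<Longrightarrow> w \<in> A \<Longrightarrow> \<Lambda> x (\<Lambda> (cinv x) w) = w"
  using lam_circ[of x "cinv x" w] by simp

lemma lam_cinv [simp]: "x \<in> A \<Longrightarrow> \<Lambda> x (cinv x) = \<boxminus> x"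
  by (simp add: lam_def)

lemma star_closed [simp]: "x \<in> A \<Longrightarrow> y \<in> A \<Longrightarrow> x \<star> y \<in> A"
  by (simp add: star_def)

lemma star_eq_zero_iff: "x \<in> A \<Longrightarrow> y \<in> A \<Longrightarrow> x \<star> y = z \<longleftrightarrow> \<Lambda> x y = y"
  by (simp add: star_def add_ainv_eq_iff_right del: add_assoc)

lemma star_add:
  "x \<in> A \<Longrightarrow> y \<in> A \<Longrightarrow> w \<in> A \<Longrightarrow> x \<star> (y \<boxplus> w) = x \<star> y \<boxplus> y \<boxplus> x \<star> w \<boxplus> \<boxminus> y"
  by (simp add: star_def lam_add)

lemma conj_star:
  "x \<in> A \<Longrightarrow> a \<in> A \<Longrightarrow> b \<in> A \<Longrightarrow> a \<boxplus> x \<star> b \<boxplus> \<boxminus> a = \<boxminus> (x \<star> a) \<boxplus> x \<star> (a \<boxplus> b)"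
  by (simp add: star_add del: ainv_add)

lemma star_set_mono:
  "U \<subseteq> U' \<Longrightarrow> V \<subseteq> V' \<Longrightarrow> star_set A add circ z U V \<subseteq> star_set A add circ z U' V'"
  unfolding star_set_def by (intro G.mono_generate) blast

lemma star_set_right_normal:
  assumes "U \<subseteq> A"
  shows "star_set A add circ z U A \<lhd> G"
  unfolding star_set_def
proof (rule G.normal_generate_conjI)
  show "{x \<star> y |x y. x \<in> U \<and> y \<in> A} \<subseteq> carrier G"
    using assms by auto
  let ?H = "generate G {x \<star> y |x y. x \<in> U \<and> y \<in> A}"
  fix h a
  assume "h \<in> {x \<star> y |x y. x \<in> U \<and> y \<in> A}" and a: "a \<in> carrier G"
  then obtain x b where h: "h = x \<star> b" and "x \<in> U" "b \<in> A" by blast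
  then have "x \<in> A" using assms by blast
  have "x \<star> c \<in> ?H" if "c \<in> A" for c
    using \<open>x \<in> U\<close> that by (auto intro!: generate.incl)
  then have "x \<star> a \<in> ?H" "x \<star> (a \<boxplus> b) \<in> ?H"
    using \<open>b \<in> A\<close> a by simp_all
  moreover have "subgroup ?H G"
    using assms by (intro G.generate_is_subgroup) auto
  ultimately have "\<boxminus> (x \<star> a) \<boxplus> x \<star> (a \<boxplus> b) \<in> ?H"
    using subgroup.m_closed subgroup.m_inv_closed by fastforce
  then show "a \<otimes>\<^bsub>G\<^esub> h \<otimes>\<^bsub>G\<^esub> inv\<^bsub>G\<^esub> a \<in> ?H"
    using conj_star \<open>x \<in> A\<close> \<open>b \<in> A\<close> a h by simp
qed

lemma brace_idealD:
  assumes "brace_ideal A add circ z I"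
  shows "subgroup I G" and "I \<subseteq> A" and "I \<lhd> G" and "I \<lhd> C"
    and "\<And>a x. a \<in> A \<Longrightarrow> x \<in> I \<Longrightarrow> \<Lambda> a x \<in> I"
  using assms subgroup.subset[of I G] unfolding brace_ideal_def by auto

lemma brace_ideal_carrier: "brace_ideal A add circ z A"
  unfolding brace_ideal_def using G.subgroup_self G.normal_self C.normal_self by auto

lemma star_mem_ideal_left:
  assumes "brace_ideal A add circ z I" and "a \<in> A" and "x \<in> I"
  shows "a \<star> x \<in> I"
proof -
  note I = brace_idealD[OF assms(1)]
  have "\<Lambda> a x \<boxplus> \<boxminus> x \<in> I"
    using I(5)[OF assms(2,3)] subgroup.m_closed[OF I(1)] subgroup.m_inv_closed[OF I(1)] assms(3)
    by simp
  then show ?thesis by (simp add: star_def)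
qed

lemma star_mem_ideal_right:
  assumes "brace_ideal A add circ z I" and "y \<in> I" and "a \<in> A"
  shows "y \<star> a \<in> I"
proof -
  note I = brace_idealD[OF assms(1)]
  have "y \<in> A" using I(2) assms(2) by blast
  define y' where "y' = cinv a \<bullet> y \<bullet> a"
  have "y' \<in> I"
    using normal.inv_op_closed1[OF I(4)] assms(2,3) unfolding y'_def by simp
  then have "y' \<in> A" using I(2) by blast
  have "y \<bullet> a = a \<boxplus> \<Lambda> a y'"
    using \<open>y \<in> A\<close> assms(3) by (simp add: y'_def circ_eq_add_lam[symmetric])
  then have "y \<star> a = \<boxminus> y \<boxplus> (a \<boxplus> \<Lambda> a y' \<boxplus> \<boxminus> a)"
    using \<open>y \<in> A\<close> \<open>y' \<in> A\<close> assms(3) by (simp add: star_def lam_def)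
  moreover have "a \<boxplus> \<Lambda> a y' \<boxplus> \<boxminus> a \<in> I"
    using normal.inv_op_closed2[OF I(3)] I(5)[OF assms(3) \<open>y' \<in> I\<close>] assms(3) by simp
  ultimately show ?thesis
    using subgroup.m_closed[OF I(1)] subgroup.m_inv_closed[OF I(1)] assms(2) by simp
qed

lemma ideal_contains_right_annihilated_normal_subgroup:
  assumes I: "brace_ideal A add circ z I" and "\<not> I \<subseteq> {z}"
    and "right_series A add circ z m = {z}"
  shows "\<exists>N. N \<lhd> G \<and> N \<subseteq> I \<and> \<not> N \<subseteq> {z} \<and> (\<forall>x\<in>N. \<forall>a\<in>A. x \<star> a = z)"
proof -
  note ideal = brace_idealD[OF I]
  have "\<exists>N. (N \<lhd> G \<and> N \<subseteq> I) \<and> \<not> N \<subseteq> {z} \<and> star_set A add circ z N A \<subseteq> {z}"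
  proof (rule exists_last_nontrivial_stage[where T = "right_series A add circ z" and n = m])
    show "star_set A add circ z N A \<lhd> G \<and> star_set A add circ z N A \<subseteq> I"
      if "N \<lhd> G \<and> N \<subseteq> I" for N
    proof
      show "star_set A add circ z N A \<lhd> G"
        using that ideal(2) by (intro star_set_right_normal) blast
      show "star_set A add circ z N A \<subseteq> I"
        unfolding star_set_def using that star_mem_ideal_right[OF I]
        by (intro G.generate_subgroup_incl[OF _ ideal(1)]) blast
    qed
    show "star_set A add circ z N A \<subseteq> right_series A add circ z (Suc k)"
      if "N \<subseteq> right_series A add circ z k" for N k
      using that by (simp add: star_set_mono)
  qed (use assms ideal in auto)
  then obtain N where "N \<lhd> G" "N \<subseteq> I" "\<not> N \<subseteq> {z}" and "star_set A add circ z N A \<subseteq> {z}"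
    by blast
  moreover have "x \<star> a \<in> star_set A add circ z N A" if "x \<in> N" "a \<in> A" for x a
    unfolding star_set_def using that by (auto intro: generate.incl)
  ultimately show ?thesis by blast
qed

definition socle :: "'a set" where
  "socle = {x \<in> A. \<forall>a\<in>A. \<Lambda> x a = a \<and> a \<boxplus> x = x \<boxplus> a}"

lemma socleI:
  "x \<in> A \<Longrightarrow> (\<And>a. a \<in> A \<Longrightarrow> \<Lambda> x a = a) \<Longrightarrow> (\<And>a. a \<in> A \<Longrightarrow> a \<boxplus> x = x \<boxplus> a) \<Longrightarrow> x \<in> socle"
  unfolding socle_def by blast

lemma socleD:
  assumes "x \<in> socle"
  shows "x \<in> A" and "\<And>a. a \<in> A \<Longrightarrow> \<Lambda> x a = a" and "\<And>a. a \<in> A \<Longrightarrow> a \<boxplus> x = x \<boxplus> a"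
  using assms unfolding socle_def by auto

lemma mem_socle_iff: "x \<in> socle \<longleftrightarrow> x \<in> A \<and> (\<forall>a\<in>A. x \<star> a = z \<and> a \<boxplus> x = x \<boxplus> a)"
  unfolding socle_def using star_eq_zero_iff by auto

lemma socle_circ_eq_add: "x \<in> socle \<Longrightarrow> y \<in> A \<Longrightarrow> x \<bullet> y = x \<boxplus> y"
  unfolding socle_def by (simp add: circ_eq_add_lam)

lemma socle_subgroup: "subgroup socle G"
proof (rule G.subgroupI)
  show "socle \<subseteq> carrier G"
    unfolding socle_def by auto
  have "z \<in> socle"
    unfolding socle_def by simp
  then show "socle \<noteq> {}"
    by blast
next
  fix x
  assume x: "x \<in> socle"
  have "x \<in> A" and lam_x: "\<And>a. a \<in> A \<Longrightarrow> \<Lambda> x a = a" and comm_x: "\<And>a. a \<in> A \<Longrightarrow> a \<boxplus> x = x \<boxplus> a"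
    using socleD[OF x] by blast+
  have "\<Lambda> (\<boxminus> x) a = a" if "a \<in> A" for a
  proof -
    have "\<Lambda> x (\<Lambda> (\<boxminus> x) a) = a"
      using lam_circ[of x "\<boxminus> x" a] socle_circ_eq_add[OF x] \<open>x \<in> A\<close> that by simp
    then show ?thesis
      using lam_x \<open>x \<in> A\<close> that by simp
  qed
  moreover have "a \<boxplus> \<boxminus> x = \<boxminus> x \<boxplus> a" if "a \<in> A" for a
  proof -
    have "a \<boxplus> \<boxminus> x = \<boxminus> x \<boxplus> (x \<boxplus> a) \<boxplus> \<boxminus> x"
      using \<open>x \<in> A\<close> that by simp
    also have "\<dots> = \<boxminus> x \<boxplus> (a \<boxplus> x) \<boxplus> \<boxminus> x"
      using comm_x[OF that] by simp
    also have "\<dots> = \<boxminus> x \<boxplus> a"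
      using \<open>x \<in> A\<close> that by simp
    finally show ?thesis .
  qed
  ultimately show "inv\<^bsub>G\<^esub> x \<in> socle"
    using \<open>x \<in> A\<close> by (simp only: add_grp_simps) (intro socleI ainv_closed)
next
  fix x y
  assume x: "x \<in> socle" and y: "y \<in> socle"
  have "x \<in> A" and lam_x: "\<And>a. a \<in> A \<Longrightarrow> \<Lambda> x a = a" and comm_x: "\<And>a. a \<in> A \<Longrightarrow> a \<boxplus> x = x \<boxplus> a"
    using socleD[OF x] by blast+
  have "y \<in> A" and lam_y: "\<And>a. a \<in> A \<Longrightarrow> \<Lambda> y a = a" and comm_y: "\<And>a. a \<in> A \<Longrightarrow> a \<boxplus> y = y \<boxplus> a"
    using socleD[OF y] by blast+
  have "\<Lambda> (x \<boxplus> y) a = a" if "a \<in> A" for a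
    using lam_circ[of x y a] socle_circ_eq_add[OF x \<open>y \<in> A\<close>] lam_x lam_y \<open>x \<in> A\<close> \<open>y \<in> A\<close> that
    by simp
  moreover have "a \<boxplus> (x \<boxplus> y) = x \<boxplus> y \<boxplus> a" if "a \<in> A" for a
  proof -
    have "a \<boxplus> (x \<boxplus> y) = a \<boxplus> x \<boxplus> y"
      using \<open>x \<in> A\<close> \<open>y \<in> A\<close> that by simp
    also have "\<dots> = x \<boxplus> (a \<boxplus> y)"
      using comm_x[OF that] \<open>x \<in> A\<close> \<open>y \<in> A\<close> that by simp
    also have "\<dots> = x \<boxplus> y \<boxplus> a"
      using comm_y[OF that] \<open>x \<in> A\<close> \<open>y \<in> A\<close> that by simp
    finally show ?thesis .
  qed
  ultimately show "x \<otimes>\<^bsub>G\<^esub> y \<in> socle"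
    using \<open>x \<in> A\<close> \<open>y \<in> A\<close> by (simp only: add_grp_simps) (intro socleI add_closed)
qed

lemma lam_mem_socle:
  assumes a: "a \<in> A" and x: "x \<in> socle"
  shows "\<Lambda> a x \<in> socle"
proof -
  have "x \<in> A" and lam_x: "\<And>b. b \<in> A \<Longrightarrow> \<Lambda> x b = b"
    and comm_x: "\<And>b. b \<in> A \<Longrightarrow> b \<boxplus> x = x \<boxplus> b"
    using socleD[OF x] by blast+
  have comm: "b \<boxplus> \<Lambda> a x = \<Lambda> a x \<boxplus> b" if "b \<in> A" for b
  proof -
    define b' where "b' = \<Lambda> (cinv a) b"
    have "b' \<in> A" and b: "\<Lambda> a b' = b"
      using a that unfolding b'_def by simp_all
    have "b \<boxplus> \<Lambda> a x = \<Lambda> a (b' \<boxplus> x)"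
      using lam_add a \<open>b' \<in> A\<close> \<open>x \<in> A\<close> b by simp
    also have "\<dots> = \<Lambda> a (x \<boxplus> b')"
      using comm_x[OF \<open>b' \<in> A\<close>] by simp
    also have "\<dots> = \<Lambda> a x \<boxplus> b"
      using lam_add a \<open>b' \<in> A\<close> \<open>x \<in> A\<close> b by simp
    finally show ?thesis .
  qed
  have conj: "a \<bullet> x \<bullet> cinv a = \<Lambda> a x"
  proof -
    have "a \<bullet> x \<bullet> cinv a = a \<bullet> (x \<boxplus> cinv a)"
      using socle_circ_eq_add[OF x] a \<open>x \<in> A\<close> by simp
    also have "\<dots> = a \<boxplus> \<Lambda> a x \<boxplus> \<boxminus> a"
      using circ_add_distrib[of a x "cinv a"] a \<open>x \<in> A\<close> by (simp add: circ_eq_add_lam)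
    also have "\<dots> = \<Lambda> a x"
      using comm[OF a] a \<open>x \<in> A\<close> by simp
    finally show ?thesis .
  qed
  have "\<Lambda> (\<Lambda> a x) w = w" if "w \<in> A" for w
    using lam_circ a \<open>x \<in> A\<close> that lam_x unfolding conj[symmetric] by simp
  then show ?thesis
    using comm a \<open>x \<in> A\<close> by (intro socleI) simp_all
qed

lemma star_mem_socle: "a \<in> A \<Longrightarrow> x \<in> socle \<Longrightarrow> a \<star> x \<in> socle"
  unfolding star_def
  using lam_mem_socle subgroup.m_closed[OF socle_subgroup] subgroup.m_inv_closed[OF socle_subgroup]
  by simp

lemma ideal_meets_socle:
  assumes "nilpotent_type A add z" and "right_series A add circ z m = {z}"
    and I: "brace_ideal A add circ z I" and "\<not> I \<subseteq> {z}"
  shows "\<not> I \<inter> socle \<subseteq> {z}"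
proof -
  obtain n where "lower_central A add z n = {z}"
    using assms(1) unfolding nilpotent_type_def by blast
  moreover obtain N where "N \<lhd> G" "N \<subseteq> I" "\<not> N \<subseteq> {z}" and annihilated: "\<forall>x\<in>N. \<forall>a\<in>A. x \<star> a = z"
    using ideal_contains_right_annihilated_normal_subgroup[OF I assms(4,2)] by blast
  ultimately obtain x where "x \<in> N" "x \<noteq> z" "\<forall>a\<in>A. a \<boxplus> x = x \<boxplus> a"
    using normal_subgroup_meets_center by blast
  moreover have "x \<in> A"
    using \<open>x \<in> N\<close> \<open>N \<subseteq> I\<close> brace_idealD(2)[OF I] by blast
  ultimately have "x \<in> socle"
    using annihilated unfolding mem_socle_iff by blast
  then show ?thesis
    using \<open>x \<in> N\<close> \<open>N \<subseteq> I\<close> \<open>x \<noteq> z\<close> by blast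
qed

lemma ideal_socle_meets_center:
  assumes I: "brace_ideal A add circ z I" and "left_series A add circ z n = {z}"
    and "\<not> I \<inter> socle \<subseteq> {z}"
  shows "\<exists>x\<in>I. x \<noteq> z \<and> x \<in> brace_center A add circ z"
proof -
  note ideal = brace_idealD[OF I]
  have K: "subgroup (I \<inter> socle) G"
    using G.subgroups_Inter_pair[OF ideal(1) socle_subgroup] .
  have "\<exists>S. S \<subseteq> I \<inter> socle \<and> \<not> S \<subseteq> {z} \<and> star_set A add circ z A S \<subseteq> {z}"
  proof (rule exists_last_nontrivial_stage[where T = "left_series A add circ z" and n = n])
    show "star_set A add circ z A S \<subseteq> I \<inter> socle" if "S \<subseteq> I \<inter> socle" for S
      unfolding star_set_def using that star_mem_ideal_left[OF I] star_mem_socle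
      by (intro G.generate_subgroup_incl[OF _ K]) blast
    show "star_set A add circ z A S \<subseteq> left_series A add circ z (Suc k)"
      if "S \<subseteq> left_series A add circ z k" for S k
      using that by (simp add: star_set_mono)
  qed (use assms ideal(2) in auto)
  then obtain S x where "S \<subseteq> I \<inter> socle" "x \<in> S" "x \<noteq> z"
    and annihilating: "star_set A add circ z A S \<subseteq> {z}"
    by blast
  then have "x \<in> socle" "x \<in> I" "x \<in> A"
    using socleD(1) by auto
  have "a \<star> x \<in> star_set A add circ z A S" if "a \<in> A" for a
    unfolding star_set_def using that \<open>x \<in> S\<close> by (auto intro: generate.incl)
  then have "a \<star> x = z" if "a \<in> A" for a
    using annihilating that by blast
  moreover have "x \<star> a = z" "acomm A add z x a = z" if "a \<in> A" for a
    using \<open>x \<in> socle\<close> that acomm_eq_zero_iff[OF \<open>x \<in> A\<close> that] unfolding mem_socle_iff by auto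
  ultimately have "x \<in> brace_center A add circ z"
    unfolding brace_center_def using \<open>x \<in> A\<close> by blast
  then show ?thesis
    using \<open>x \<in> I\<close> \<open>x \<noteq> z\<close> by blast
qed

theorem brace_center_meets_ideal:
  assumes "nilpotent_type A add z" and "star_nilpotent A add circ z"
    and I: "brace_ideal A add circ z I" and "I \<noteq> {z}"
  shows "brace_center A add circ z \<inter> I \<noteq> {z}"
proof -
  obtain n m where left: "left_series A add circ z n = {z}" and right: "right_series A add circ z m = {z}"
    using assms(2) unfolding star_nilpotent_def by blast
  have "\<not> I \<subseteq> {z}"
    using assms(4) subgroup.one_closed[OF brace_idealD(1)[OF I]] by auto
  then have "\<not> I \<inter> socle \<subseteq> {z}"
    by (rule ideal_meets_socle[OF assms(1) right I])
  then obtain x where "x \<in> I" "x \<noteq> z" "x \<in> brace_center A add circ z"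
    using ideal_socle_meets_center[OF I left] by blast
  then show ?thesis by blast
qed

end

theorem mainTheorem7:
  fixes A :: "'a set" and plus_op circ :: "'a \<Rightarrow> 'a \<Rightarrow> 'a" and z :: 'a
  assumes "skew_brace A plus_op circ z"
    and "nilpotent_type A plus_op z"
    and "star_nilpotent A plus_op circ z"
  shows "(\<forall>I. brace_ideal A plus_op circ z I \<and> I \<noteq> {z} \<longrightarrow> brace_center A plus_op circ z \<inter> I \<noteq> {z})
         \<and> (A \<noteq> {z} \<longrightarrow> brace_center A plus_op circ z \<noteq> {z})"
proof -
  interpret skew_brace_on A plus_op circ z
    by (rule skew_brace_on.intro) fact
  have ideals: "brace_center A plus_op circ z \<inter> I \<noteq> {z}"
    if "brace_ideal A plus_op circ z I" and "I \<noteq> {z}" for I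
    using brace_center_meets_ideal[OF assms(2,3) that] .
  have "brace_center A plus_op circ z \<inter> A = brace_center A plus_op circ z"
    unfolding brace_center_def by blast
  then have "A \<noteq> {z} \<Longrightarrow> brace_center A plus_op circ z \<noteq> {z}"
    using ideals[OF brace_ideal_carrier] by simp
  with ideals show ?thesis
    by blast
qed

end
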